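(* Every width-$k$ puzzle that is a USP (in particular every strong USP) has size at most $2^k$.
   Context: A width-$k$ puzzle is a finite set $P \subseteq \{1,2,3\}^k$, of size $|P|$; for $r\in P$, $r_c$ is the $c$-th coordinate. $\mathrm{Sym}(P)$ is the group of permutations of $P$. $P$ is a USP if for all $\pi_1,\pi_2,\pi_3 \in \mathrm{Sym}(P)$, either $\pi_1=\pi_2=\pi_3$, or there exist $r \in P$ and $c \in [k]$ such that at least two of $(\pi_1(r))_c = 1$, $(\pi_2(r))_c = 2$, $(\pi_3(r))_c = 3$ hold. $P$ is a strong USP if the same holds with "at least two" replaced by "exactly two". *)

theory Defs
  imports "HOL-Combinatorics.Permutations"
begin

text \<open>A row of a width-k puzzle is a list of length k with entries in {1,2,3};
  coordinate c in [k] corresponds to list index c-1 (0-based, c < k).\<close>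

definition puzzle :: "nat \<Rightarrow> nat list set \<Rightarrow> bool" where
  "puzzle k P \<longleftrightarrow> finite P \<and> (\<forall>r\<in>P. length r = k \<and> set r \<subseteq> {1,2,3})"

definition USP :: "nat \<Rightarrow> nat list set \<Rightarrow> bool" where
  "USP k P \<longleftrightarrow>
    (\<forall>\<pi>1 \<pi>2 \<pi>3. \<pi>1 permutes P \<and> \<pi>2 permutes P \<and> \<pi>3 permutes P \<longrightarrow>
      (\<pi>1 = \<pi>2 \<and> \<pi>2 = \<pi>3) \<or>
      (\<exists>r\<in>P. \<exists>c<k.
        let a = (\<pi>1 r ! c = 1); b = (\<pi>2 r ! c = 2); d = (\<pi>3 r ! c = 3)
        in (a \<and> b) \<or> (a \<and> d) \<or> (b \<and> d)))"

definition strong_USP :: "nat \<Rightarrow> nat list set \<Rightarrow> bool" where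
  "strong_USP k P \<longleftrightarrow>
    (\<forall>\<pi>1 \<pi>2 \<pi>3. \<pi>1 permutes P \<and> \<pi>2 permutes P \<and> \<pi>3 permutes P \<longrightarrow>
      (\<pi>1 = \<pi>2 \<and> \<pi>2 = \<pi>3) \<or>
      (\<exists>r\<in>P. \<exists>c<k.
        let a = (\<pi>1 r ! c = 1); b = (\<pi>2 r ! c = 2); d = (\<pi>3 r ! c = 3)
        in (a \<and> b \<and> \<not> d) \<or> (a \<and> d \<and> \<not> b) \<or> (b \<and> d \<and> \<not> a)))"

end

theory Submission
  imports Defs
begin

text \<open>Map each row to the set of coordinates where it carries a 3. Applying the USP property
  to the permutations id, id and the transposition of two distinct rows r, s shows
  that some row t has a 1 or 2 at a coordinate where the transposed row has a 3; this is only
  possible if r and s differ in their 3-positions. So the map is injective and the puzzle has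
  at most as many rows as there are subsets of [k].\<close>

definition three_positions :: "nat \<Rightarrow> nat list \<Rightarrow> nat set" where
  "three_positions k r = {c. c < k \<and> r ! c = 3}"

lemma strong_USP_imp_USP:
  assumes "strong_USP k P"
  shows "USP k P"
  unfolding USP_def
proof (intro allI impI)
  fix \<pi>1 \<pi>2 \<pi>3
  assume "\<pi>1 permutes P \<and> \<pi>2 permutes P \<and> \<pi>3 permutes P"
  with assms show "(\<pi>1 = \<pi>2 \<and> \<pi>2 = \<pi>3) \<or> (\<exists>r\<in>P. \<exists>c<k.
      let a = (\<pi>1 r ! c = 1); b = (\<pi>2 r ! c = 2); d = (\<pi>3 r ! c = 3)
      in (a \<and> b) \<or> (a \<and> d) \<or> (b \<and> d))"
    unfolding strong_USP_def Let_def by (elim allE impE; fastforce)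
qed

lemma transpose_ne_id: "r \<noteq> s \<Longrightarrow> transpose r s \<noteq> id"
  by (metis id_apply transpose_apply_first)

lemma USP_transpose_witness:
  assumes "USP k P" "r \<in> P" "s \<in> P" "r \<noteq> s"
  obtains t c where "t \<in> P" "c < k" "t ! c \<noteq> 3" "transpose r s t ! c = 3"
proof -
  have "transpose r s permutes P"
    using assms(2,3) by (rule permutes_swap_id)
  then have "\<exists>t\<in>P. \<exists>c<k. let a = (t ! c = 1); b = (t ! c = 2); d = (transpose r s t ! c = 3)
      in (a \<and> b) \<or> (a \<and> d) \<or> (b \<and> d)"
    using assms(1)[unfolded USP_def, rule_format, of id id "transpose r s"]
      transpose_ne_id[OF assms(4)] permutes_id[of P] by simp
  then show thesis
    using that by (auto simp: Let_def)
qed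

lemma USP_inj_on_three_positions:
  assumes "USP k P"
  shows "inj_on (three_positions k) P"
proof (rule inj_onI, rule ccontr)
  fix r s
  assume r: "r \<in> P" and s: "s \<in> P" and eq: "three_positions k r = three_positions k s"
    and "r \<noteq> s"
  then obtain t c where t: "t \<in> P" "c < k" "t ! c \<noteq> 3" "transpose r s t ! c = 3"
    using USP_transpose_witness[OF assms] by metis
  have same_three: "r ! c = 3 \<longleftrightarrow> s ! c = 3"
    using eq \<open>c < k\<close> unfolding three_positions_def by blast
  consider "t = r" | "t = s" | "t \<noteq> r" "t \<noteq> s"
    by blast
  then show False
  proof cases
    case 1
    then show False using t same_three by simp
  next
    case 2
    then show False using t same_three by simp
  next
    case 3
    then show False using t by simp
  qed
qed

lemma card_le_two_pow_if_inj_on_three_positions: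
  assumes "inj_on (three_positions k) P"
  shows "card P \<le> 2 ^ k"
proof -
  have "three_positions k ` P \<subseteq> Pow {..<k}"
    unfolding three_positions_def by auto
  then have "card (three_positions k ` P) \<le> card (Pow {..<k})"
    by (intro card_mono) auto
  then show ?thesis
    by (simp add: card_image[OF assms] card_Pow)
qed

theorem mainTheorem4:
  fixes k :: nat and P :: "nat list set"
  assumes "puzzle k P"
  shows "(USP k P \<longrightarrow> card P \<le> 2 ^ k) \<and> (strong_USP k P \<longrightarrow> card P \<le> 2 ^ k)"
  using card_le_two_pow_if_inj_on_three_positions[OF USP_inj_on_three_positions]
    strong_USP_imp_USP by blast

end
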